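(* Let $(X,d)$ be a complete metric space and let $T:X\to X$ be a mapping for which there exists $\beta\in[0,\tfrac23)$ such that $$d(Tx,T^2x)+d(T^2x,Ty)+d(Ty,Tx)\le \beta\,[\,d(x,Tx)+d(y,Ty)+d(Tx,T^2x)\,]$$ for all $x,y\in X$ such that $x$, $y$, $Tx$ are pairwise distinct (i.e. $T$ is a generalized orbital triangular Kannan contraction). Suppose that $T$ has no periodic points of prime period $2$. Then $T$ has a fixed point.
   Context: A point $x\in X$ is a periodic point of period $n$ of $T$ if $T^n x=x$; the least positive integer $n$ with $T^nx=x$ is its prime period. Thus "no periodic points of prime period $2$" means there is no $x\in X$ with $T^2x=x$ and $Tx\neq x$. *)

theory Defs
  imports "HOL-Analysis.Analysis"
begin

end

theory Submission
  imports Defs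
begin

(* Suppose T has no fixed point. Along an orbit x_n = T^n x0 the points x_n, x_(n+1), x_(n+2) are
   then pairwise distinct (no period 2), and the contraction condition for the pair (x_(n+1), x_n)
   bounds the perimeter P_(n+1) of the next triangle by beta (P_n + P_(n+1)/2), using that one side
   is at most half the perimeter. Hence P_(n+1) <= q P_n with q = 2 beta/(2 - beta) < 1, the step
   lengths are summable and the orbit converges to some z. A repeated orbit point would make the
   orbit periodic with step lengths bounded away from 0, so the orbit is injective and eventually
   avoids z; applying the condition to the pairs (x_n, z) and passing to the limit gives
   2 d(z, Tz) <= beta d(z, Tz), so z is a fixed point after all. *)

lemma dist_le_sum_dist_Suc:
  fixes x :: "nat \<Rightarrow> 'a::metric_space"
  assumes "m \<le> n"
  shows "dist (x m) (x n) \<le> (\<Sum>i=m..<n. dist (x i) (x (Suc i)))"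
  using assms
proof (induction n rule: dec_induct)
  case base
  show ?case by simp
next
  case (step n)
  have "dist (x m) (x (Suc n)) \<le> dist (x m) (x n) + dist (x n) (x (Suc n))"
    by (rule dist_triangle)
  also have "\<dots> \<le> (\<Sum>i=m..<Suc n. dist (x i) (x (Suc i)))"
    using step by simp
  finally show ?case .
qed

lemma Cauchy_if_summable_dist_Suc:
  fixes x :: "nat \<Rightarrow> 'a::metric_space"
  assumes "summable (\<lambda>n. dist (x n) (x (Suc n)))"
  shows "Cauchy x"
proof (rule metric_CauchyI)
  fix e :: real
  assume "0 < e"
  with assms obtain N where N: "\<forall>m\<ge>N. \<forall>n. norm (\<Sum>i=m..<n. dist (x i) (x (Suc i))) < e"
    unfolding summable_Cauchy by blast
  have "dist (x m) (x n) < e" if "N \<le> m" "m \<le> n" for m n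
  proof -
    have "dist (x m) (x n) \<le> (\<Sum>i=m..<n. dist (x i) (x (Suc i)))"
      using \<open>m \<le> n\<close> by (rule dist_le_sum_dist_Suc)
    also have "\<dots> \<le> norm (\<Sum>i=m..<n. dist (x i) (x (Suc i)))"
      by simp
    also have "\<dots> < e"
      using N \<open>N \<le> m\<close> by blast
    finally show ?thesis .
  qed
  then show "\<exists>M. \<forall>m\<ge>M. \<forall>n\<ge>M. dist (x m) (x n) < e"
    by (metis dist_commute nle_le)
qed

lemma inj_orbit_if_dist_Suc_tendsto_0:
  fixes f :: "'a::metric_space \<Rightarrow> 'a"
  assumes moving: "\<And>n. f ((f ^^ n) x0) \<noteq> (f ^^ n) x0"
    and steps: "(\<lambda>n. dist ((f ^^ n) x0) ((f ^^ Suc n) x0)) \<longlonglongrightarrow> 0"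
  shows "inj (\<lambda>n. (f ^^ n) x0)"
proof (rule linorder_injI)
  fix n m :: nat
  assume "n < m"
  define p where "p = m - n"
  show "(f ^^ n) x0 \<noteq> (f ^^ m) x0"
  proof
    assume loop: "(f ^^ n) x0 = (f ^^ m) x0"
    have periodic: "(f ^^ (n + k * p)) x0 = (f ^^ n) x0" for k
    proof (induction k)
      case (Suc k)
      have "(f ^^ (n + Suc k * p)) x0 = (f ^^ p) ((f ^^ (n + k * p)) x0)"
        by (metis add.left_commute funpow_add mult_Suc o_apply)
      also have "\<dots> = (f ^^ (p + n)) x0"
        using Suc by (simp add: funpow_add)
      also have "\<dots> = (f ^^ m) x0"
        using \<open>n < m\<close> by (simp add: p_def)
      finally show ?case using loop by simp
    qed simp
    have "strict_mono (\<lambda>k. n + k * p)"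
      using \<open>n < m\<close> by (intro strict_monoI) (simp add: p_def)
    from LIMSEQ_subseq_LIMSEQ[OF steps this]
    have "(\<lambda>k. dist ((f ^^ n) x0) ((f ^^ Suc n) x0)) \<longlonglongrightarrow> 0"
      by (simp add: o_def periodic)
    then show False
      using moving[of n] by (simp add: LIMSEQ_const_iff)
  qed
qed

lemma eventually_neq_if_inj:
  assumes "inj x"
  shows "eventually (\<lambda>n. x n \<noteq> z) sequentially"
  using finite_vimageI[of "{z}" x] assms
  by (simp add: eventually_cofinite vimage_def flip: cofinite_eq_sequentially)

definition perimeter :: "'a::metric_space \<Rightarrow> 'a \<Rightarrow> 'a \<Rightarrow> real" where
  "perimeter a b c = dist a b + dist b c + dist c a"

lemma perimeter_rotate: "perimeter a b c = perimeter b c a"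
  by (simp add: perimeter_def)

lemma dist_le_half_perimeter: "dist a b \<le> perimeter a b c / 2"
  using dist_triangle[of a b c] by (simp add: perimeter_def dist_commute)

locale orbital_triangular_kannan =
  fixes T :: "'a::metric_space \<Rightarrow> 'a" and \<beta> :: real
  assumes beta_nonneg: "0 \<le> \<beta>" and beta_less: "\<beta> < 2/3"
    and perimeter_image_le: "\<And>x y. x \<noteq> y \<Longrightarrow> y \<noteq> T x \<Longrightarrow> x \<noteq> T x \<Longrightarrow>
      perimeter (T x) (T (T x)) (T y) \<le> \<beta> * (dist x (T x) + dist y (T y) + dist (T x) (T (T x)))"
begin

definition ratio :: real where
  "ratio = 2 * \<beta> / (2 - \<beta>)"

lemma ratio_nonneg: "0 \<le> ratio" and ratio_less_1: "ratio < 1"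
  using beta_nonneg beta_less by (simp_all add: ratio_def field_simps)

lemma perimeter_T_le:
  assumes "T x \<noteq> x" "T (T x) \<noteq> x" "T (T x) \<noteq> T x"
  shows "perimeter (T x) (T (T x)) (T (T (T x))) \<le> ratio * perimeter x (T x) (T (T x))"
proof -
  let ?P = "perimeter x (T x) (T (T x))"
    and ?P' = "perimeter (T x) (T (T x)) (T (T (T x)))"
  have "?P' \<le> \<beta> * (dist (T x) (T (T x)) + dist x (T x) + dist (T (T x)) (T (T (T x))))"
    using perimeter_image_le[of "T x" x] assms by (simp add: perimeter_rotate[of "T x"])
  also have "\<dots> \<le> \<beta> * (?P + ?P' / 2)"
  proof -
    have "dist (T x) (T (T x)) + dist x (T x) \<le> ?P"
      by (simp add: perimeter_def)
    moreover have "dist (T (T x)) (T (T (T x))) \<le> ?P' / 2"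
      using dist_le_half_perimeter[of "T (T x)" "T (T (T x))" "T x"]
      by (simp add: perimeter_rotate[of "T x"])
    ultimately show ?thesis
      using beta_nonneg by (intro mult_left_mono) linarith+
  qed
  finally have "(2 - \<beta>) * ?P' \<le> 2 * \<beta> * ?P"
    by (simp add: algebra_simps)
  then show ?thesis
    using beta_less by (simp add: ratio_def field_simps)
qed

lemma perimeter_orbit_le:
  assumes "\<And>x. T x \<noteq> x" "\<And>x. T (T x) \<noteq> x"
  shows "perimeter ((T ^^ n) x0) ((T ^^ Suc n) x0) ((T ^^ Suc (Suc n)) x0)
    \<le> ratio ^ n * perimeter x0 (T x0) (T (T x0))"
proof (induction n)
  case (Suc n)
  have "perimeter ((T ^^ Suc n) x0) ((T ^^ Suc (Suc n)) x0) ((T ^^ Suc (Suc (Suc n))) x0)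
      \<le> ratio * perimeter ((T ^^ n) x0) ((T ^^ Suc n) x0) ((T ^^ Suc (Suc n)) x0)"
    using perimeter_T_le assms by simp
  also have "\<dots> \<le> ratio ^ Suc n * perimeter x0 (T x0) (T (T x0))"
    using mult_left_mono[OF Suc ratio_nonneg] by (simp add: mult.assoc)
  finally show ?case .
qed simp

lemma summable_dist_orbit:
  assumes "\<And>x. T x \<noteq> x" "\<And>x. T (T x) \<noteq> x"
  shows "summable (\<lambda>n. dist ((T ^^ n) x0) ((T ^^ Suc n) x0))"
proof (rule summable_comparison_test')
  show "summable (\<lambda>n. perimeter x0 (T x0) (T (T x0)) * ratio ^ n)"
    using ratio_nonneg ratio_less_1 by (simp add: summable_geometric)
  show "norm (dist ((T ^^ n) x0) ((T ^^ Suc n) x0))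
      \<le> perimeter x0 (T x0) (T (T x0)) * ratio ^ n" for n
  proof -
    have "dist ((T ^^ n) x0) ((T ^^ Suc n) x0)
        \<le> perimeter ((T ^^ n) x0) ((T ^^ Suc n) x0) ((T ^^ Suc (Suc n)) x0)"
      using dist_le_half_perimeter[of "(T ^^ n) x0" "(T ^^ Suc n) x0" "(T ^^ Suc (Suc n)) x0"]
        zero_le_dist[of "(T ^^ n) x0" "(T ^^ Suc n) x0"] by linarith
    also have "\<dots> \<le> perimeter x0 (T x0) (T (T x0)) * ratio ^ n"
      using perimeter_orbit_le[OF assms] by (simp add: mult.commute)
    finally show ?thesis
      by simp
  qed
qed

lemma fixed_point_if_orbit_tendsto:
  assumes moving: "\<And>n. T ((T ^^ n) x0) \<noteq> (T ^^ n) x0"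
    and lim: "(\<lambda>n. (T ^^ n) x0) \<longlonglongrightarrow> z"
    and avoids: "eventually (\<lambda>n. (T ^^ n) x0 \<noteq> z) sequentially"
  shows "T z = z"
proof -
  have lim_Suc: "(\<lambda>n. (T ^^ Suc n) x0) \<longlonglongrightarrow> z"
    and lim_Suc2: "(\<lambda>n. (T ^^ Suc (Suc n)) x0) \<longlonglongrightarrow> z"
    using LIMSEQ_Suc[OF lim] LIMSEQ_Suc[OF LIMSEQ_Suc[OF lim]] by simp_all
  have avoids_Suc: "eventually (\<lambda>n. (T ^^ Suc n) x0 \<noteq> z) sequentially"
    using eventually_sequentially_Suc[where P="\<lambda>n. (T ^^ n) x0 \<noteq> z"] avoids by blast
  have bound: "eventually (\<lambda>n. perimeter ((T ^^ Suc n) x0) ((T ^^ Suc (Suc n)) x0) (T z)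
      \<le> \<beta> * (dist ((T ^^ n) x0) ((T ^^ Suc n) x0) + dist z (T z)
             + dist ((T ^^ Suc n) x0) ((T ^^ Suc (Suc n)) x0))) sequentially"
    using avoids avoids_Suc
  proof eventually_elim
    case (elim n)
    then have "z \<noteq> T ((T ^^ n) x0)"
      by auto
    then show ?case
      using perimeter_image_le[of "(T ^^ n) x0" z] moving[of n] elim by simp
  qed
  have "perimeter z z (T z) \<le> \<beta> * (dist z z + dist z (T z) + dist z z)"
  proof (rule tendsto_le[OF sequentially_bot _ _ bound])
    show "(\<lambda>n. perimeter ((T ^^ Suc n) x0) ((T ^^ Suc (Suc n)) x0) (T z))
      \<longlonglongrightarrow> perimeter z z (T z)"
      unfolding perimeter_def by (intro tendsto_add tendsto_dist lim_Suc lim_Suc2 tendsto_const)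
    show "(\<lambda>n. \<beta> * (dist ((T ^^ n) x0) ((T ^^ Suc n) x0) + dist z (T z)
             + dist ((T ^^ Suc n) x0) ((T ^^ Suc (Suc n)) x0)))
      \<longlonglongrightarrow> \<beta> * (dist z z + dist z (T z) + dist z z)"
      by (intro tendsto_mult_left tendsto_add tendsto_dist lim lim_Suc lim_Suc2 tendsto_const)
  qed
  then have "2 * dist z (T z) \<le> \<beta> * dist z (T z)"
    by (simp add: perimeter_def dist_commute)
  then have "(2 - \<beta>) * dist z (T z) \<le> 0"
    by (simp add: algebra_simps)
  then have "dist z (T z) \<le> 0"
    using beta_less by (simp add: mult_le_0_iff)
  then show ?thesis
    by simp
qed

end

theorem theorem4p1:
  fixes T :: "'a::complete_space \<Rightarrow> 'a" and \<beta> :: real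
  assumes beta: "0 \<le> \<beta>" "\<beta> < 2/3"
    and contr: "\<And>x y. x \<noteq> y \<Longrightarrow> y \<noteq> T x \<Longrightarrow> x \<noteq> T x \<Longrightarrow>
        dist (T x) (T (T x)) + dist (T (T x)) (T y) + dist (T y) (T x)
          \<le> \<beta> * (dist x (T x) + dist y (T y) + dist (T x) (T (T x)))"
    and no_period2: "\<not> (\<exists>x. (T ^^ 2) x = x \<and> T x \<noteq> x)"
  shows "\<exists>x. T x = x"
proof (rule ccontr)
  assume "\<nexists>x. T x = x"
  then have no_fixed: "\<And>x. T x \<noteq> x"
    by blast
  have no_2_cycle: "\<And>x. T (T x) \<noteq> x"
    using no_period2 no_fixed by (simp add: numeral_2_eq_2)
  interpret orbital_triangular_kannan T \<beta>
    using beta contr by unfold_locales (simp_all add: perimeter_def)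
  fix x0 :: 'a
  have steps: "summable (\<lambda>n. dist ((T ^^ n) x0) ((T ^^ Suc n) x0))"
    using no_fixed no_2_cycle by (rule summable_dist_orbit)
  then have "Cauchy (\<lambda>n. (T ^^ n) x0)"
    by (rule Cauchy_if_summable_dist_Suc)
  then obtain z where lim: "(\<lambda>n. (T ^^ n) x0) \<longlonglongrightarrow> z"
    unfolding Cauchy_convergent_iff convergent_def by blast
  have "inj (\<lambda>n. (T ^^ n) x0)"
    by (rule inj_orbit_if_dist_Suc_tendsto_0[OF no_fixed summable_LIMSEQ_zero[OF steps]])
  then have "T z = z"
    by (intro fixed_point_if_orbit_tendsto[OF _ lim] eventually_neq_if_inj no_fixed)
  with no_fixed show False
    by blast
qed

end
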